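(* For any code $\mathcal C\subseteq 2^{[n]}$, the canonical form of the code $\mathcal C\setminus n\subseteq 2^{[n-1]}$ consists exactly of the pseudo-monomials in $\mathrm{CF}(J_\mathcal C)$ that do not depend on $x_n$: $$\mathrm{CF}(J_{\mathcal C\setminus n})=\mathrm{CF}(J_\mathcal C)\setminus\{f\in\mathrm{CF}(J_\mathcal C): x_n \text{ or } (1-x_n)\text{ divides } f\}.$$
   Context: A code is a set $\mathcal C\subseteq 2^{[n]}$, $[n]=\{1,\dots,n\}$. Standing conventions: $\emptyset\in\mathcal C$; every neuron lies in some codeword; no two distinct neurons lie in exactly the same codewords. $\mathcal C\setminus n$ is the code on $[n-1]$ obtained by removing $n$ from every codeword. A pseudo-monomial in $\mathbb F_2[x_1,\dots,x_n]$ is $\prod_{i\in\sigma}x_i\prod_{j\in\tau}(1-x_j)$ with $\sigma\cap\tau=\emptyset$, ordered by divisibility. For a code $\mathcal D$ on $[m]$, $J_\mathcal D=\langle\rho_\sigma:\sigma\subseteq[m],\sigma\notin\mathcal D\rangle\subseteq\mathbb F_2[x_1,\dots,x_m]$ with $\rho_\sigma=\prod_{i\in\sigma}x_i\prod_{j\in[m]\setminus\sigma}(1-x_j)$, and $\mathrm{CF}(J_\mathcal D)$ is the set of minimal pseudo-monomials in $J_\mathcal D$. *)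

theory Defs
  imports "HOL-Library.Poly_Mapping" "HOL-Library.Z2"
begin

type_synonym f2poly = "(nat \<Rightarrow>\<^sub>0 nat) \<Rightarrow>\<^sub>0 bit"

definition Var :: "nat \<Rightarrow> f2poly" where
  "Var i = Poly_Mapping.single (Poly_Mapping.single i 1) 1"

definition polys :: "nat \<Rightarrow> f2poly set" where
  "polys m = {p. \<forall>mon \<in> Poly_Mapping.keys p. Poly_Mapping.keys mon \<subseteq> {1..m}}"

inductive_set ideal_gen :: "nat \<Rightarrow> f2poly set \<Rightarrow> f2poly set" for m G where
  zero: "0 \<in> ideal_gen m G"
| mult: "g \<in> G \<Longrightarrow> h \<in> polys m \<Longrightarrow> h * g \<in> ideal_gen m G"
| add: "a \<in> ideal_gen m G \<Longrightarrow> b \<in> ideal_gen m G \<Longrightarrow> a + b \<in> ideal_gen m G"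

definition dvd_in :: "nat \<Rightarrow> f2poly \<Rightarrow> f2poly \<Rightarrow> bool" where
  "dvd_in m g f \<longleftrightarrow> (\<exists>h \<in> polys m. f = g * h)"

definition pm :: "nat set \<Rightarrow> nat set \<Rightarrow> f2poly" where
  "pm \<sigma> \<tau> = (\<Prod>i\<in>\<sigma>. Var i) * (\<Prod>j\<in>\<tau>. 1 - Var j)"

definition pseudo_monomial :: "nat \<Rightarrow> f2poly \<Rightarrow> bool" where
  "pseudo_monomial m f \<longleftrightarrow>
     (\<exists>\<sigma> \<tau>. \<sigma> \<subseteq> {1..m} \<and> \<tau> \<subseteq> {1..m} \<and> \<sigma> \<inter> \<tau> = {} \<and> f = pm \<sigma> \<tau>)"

definition rho :: "nat \<Rightarrow> nat set \<Rightarrow> f2poly" where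
  "rho m \<sigma> = pm \<sigma> ({1..m} - \<sigma>)"

definition neural_ideal :: "nat \<Rightarrow> nat set set \<Rightarrow> f2poly set" where
  "neural_ideal m D = ideal_gen m {rho m \<sigma> | \<sigma>. \<sigma> \<subseteq> {1..m} \<and> \<sigma> \<notin> D}"

definition CF :: "nat \<Rightarrow> f2poly set \<Rightarrow> f2poly set" where
  "CF m J = {f. pseudo_monomial m f \<and> f \<in> J \<and>
     (\<forall>g. pseudo_monomial m g \<and> g \<in> J \<and> dvd_in m g f \<longrightarrow> g = f)}"

definition is_code :: "nat \<Rightarrow> nat set set \<Rightarrow> bool" where
  "is_code n C \<longleftrightarrow> C \<subseteq> Pow {1..n} \<and> {} \<in> C \<and>
     (\<forall>i\<in>{1..n}. \<exists>c\<in>C. i \<in> c) \<and>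
     (\<forall>i\<in>{1..n}. \<forall>j\<in>{1..n}. i \<noteq> j \<longrightarrow> {c\<in>C. i \<in> c} \<noteq> {c\<in>C. j \<in> c})"

definition code_del :: "nat set set \<Rightarrow> nat \<Rightarrow> nat set set" where
  "code_del C n = (\<lambda>c. c - {n}) ` C"

end

theory Submission
  imports Defs
begin

(* A pseudo-monomial x_\<sigma>(1-x_\<tau>) lies in J_D exactly when no codeword c of D satisfies
   \<sigma> \<subseteq> c and c \<inter> \<tau> = {}: necessity by evaluating at the characteristic vector of such a c,
   sufficiency by expanding x_\<sigma>(1-x_\<tau>) = x_\<sigma>(1-x_\<tau>) \<Prod>(x_k + (1-x_k)) over the remaining
   indices k into a sum of generators \<rho>. Since divisibility of pseudo-monomials is inclusion of
   the index sets, CF(J_D) consists of the pseudo-monomials of the inclusion-minimal such pairs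
   (\<sigma>,\<tau>). For \<sigma>, \<tau> \<subseteq> [n-1] a codeword c of C fits (\<sigma>,\<tau>) iff c - {n} does, so the minimal
   pairs of C \ n are precisely the minimal pairs of C not involving n, i.e. those whose
   pseudo-monomial is divisible by neither x_n nor 1 - x_n. *)

(* value at the 0/1-point with support c *)
definition eval_at :: "nat set \<Rightarrow> f2poly \<Rightarrow> bit" where
  "eval_at c p =
     (\<Sum>k\<in>Poly_Mapping.keys p. Poly_Mapping.lookup p k * of_bool (Poly_Mapping.keys k \<subseteq> c))"

lemma eval_at_zero [simp]: "eval_at c 0 = 0"
  by (simp add: eval_at_def)

lemma eval_at_one [simp]: "eval_at c 1 = 1"
  by (simp add: eval_at_def)

lemma eval_at_single: "eval_at c (Poly_Mapping.single k a) = a * of_bool (Poly_Mapping.keys k \<subseteq> c)"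
  by (simp add: eval_at_def del: sum_mult_of_bool_eq)

lemma eval_at_Var: "eval_at c (Var i) = of_bool (i \<in> c)"
  by (simp add: Var_def eval_at_single)

lemma eval_at_add: "eval_at c (p + q) = eval_at c p + eval_at c q"
  unfolding eval_at_def
  by (rule setsum_keys_plus_distrib) (simp_all only: mult_zero_left distrib_right)

lemma eval_at_diff: "eval_at c (p - q) = eval_at c p - eval_at c q"
  using eval_at_add[of c "p - q" q] by (simp only: diff_add_cancel eq_diff_eq)

lemma eval_at_sum: "eval_at c (sum f I) = (\<Sum>i\<in>I. eval_at c (f i))"
  by (induction I rule: infinite_finite_induct) (simp_all add: eval_at_add)

lemma keys_add_poly_mapping_nat:
  "Poly_Mapping.keys (k + l :: nat \<Rightarrow>\<^sub>0 nat) = Poly_Mapping.keys k \<union> Poly_Mapping.keys l"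
  by (auto simp: in_keys_iff lookup_add)

lemma poly_mapping_sum_single:
  "(\<Sum>k\<in>Poly_Mapping.keys p. Poly_Mapping.single k (Poly_Mapping.lookup p k)) = p"
  by (rule poly_mapping_eqI) (auto simp: lookup_sum lookup_single when_def in_keys_iff)

lemma eval_at_mult: "eval_at c (p * q) = eval_at c p * eval_at c q"
proof -
  let ?P = "Poly_Mapping.keys p" and ?Q = "Poly_Mapping.keys q"
  let ?e = "\<lambda>k. of_bool (Poly_Mapping.keys k \<subseteq> c) :: bit"
  have "p * q = (\<Sum>k\<in>?P. Poly_Mapping.single k (Poly_Mapping.lookup p k)) *
                (\<Sum>l\<in>?Q. Poly_Mapping.single l (Poly_Mapping.lookup q l))"
    by (simp only: poly_mapping_sum_single)
  also have "\<dots> = (\<Sum>k\<in>?P. \<Sum>l\<in>?Q.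
      Poly_Mapping.single (k + l) (Poly_Mapping.lookup p k * Poly_Mapping.lookup q l))"
    by (simp add: sum_product mult_single)
  finally have "eval_at c (p * q) =
      (\<Sum>k\<in>?P. \<Sum>l\<in>?Q. (Poly_Mapping.lookup p k * ?e k) * (Poly_Mapping.lookup q l * ?e l))"
    by (simp only: eval_at_sum eval_at_single keys_add_poly_mapping_nat Un_subset_iff
        of_bool_conj ac_simps)
  also have "\<dots> = eval_at c p * eval_at c q"
    by (simp only: eval_at_def sum_product)
  finally show ?thesis .
qed

lemma eval_at_prod: "eval_at c (prod f A) = (\<Prod>i\<in>A. eval_at c (f i))"
  by (induction A rule: infinite_finite_induct) (simp_all add: eval_at_mult)

lemma prod_of_bool:
  "finite A \<Longrightarrow> (\<Prod>i\<in>A. of_bool (P i) :: 'a::comm_semiring_1) = of_bool (\<forall>i\<in>A. P i)"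
  by (induction A rule: finite_induct) auto

lemma eval_at_pm:
  assumes "finite \<sigma>" "finite \<tau>"
  shows "eval_at c (pm \<sigma> \<tau>) = of_bool (\<sigma> \<subseteq> c \<and> \<tau> \<inter> c = {})"
  using assms
  by (simp add: pm_def eval_at_mult eval_at_prod eval_at_diff eval_at_Var prod_of_bool
      flip: of_bool_conj) blast

lemma polys_mult: "p \<in> polys m \<Longrightarrow> q \<in> polys m \<Longrightarrow> p * q \<in> polys m"
  unfolding polys_def using keys_mult[of p q] by (fastforce simp: keys_add_poly_mapping_nat)

lemma polys_diff: "p \<in> polys m \<Longrightarrow> q \<in> polys m \<Longrightarrow> p - q \<in> polys m"
  unfolding polys_def using keys_diff[of p q] by blast

lemma polys_one: "1 \<in> polys m"
  by (simp add: polys_def)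

lemma polys_Var: "i \<in> {1..m} \<Longrightarrow> Var i \<in> polys m"
  by (simp add: polys_def Var_def)

lemma polys_prod: "(\<And>i. i \<in> A \<Longrightarrow> f i \<in> polys m) \<Longrightarrow> prod f A \<in> polys m"
  by (induction A rule: infinite_finite_induct) (auto intro: polys_one polys_mult)

lemma polys_pm: "\<sigma> \<subseteq> {1..m} \<Longrightarrow> \<tau> \<subseteq> {1..m} \<Longrightarrow> pm \<sigma> \<tau> \<in> polys m"
  unfolding pm_def by (intro polys_mult polys_prod polys_diff polys_one polys_Var) auto

lemma pm_mult:
  assumes "finite \<sigma>" "finite \<tau>" "finite \<sigma>'" "finite \<tau>'" "\<sigma> \<inter> \<sigma>' = {}" "\<tau> \<inter> \<tau>' = {}"
  shows "pm \<sigma> \<tau> * pm \<sigma>' \<tau>' = pm (\<sigma> \<union> \<sigma>') (\<tau> \<union> \<tau>')"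
  using assms by (simp add: pm_def prod.union_disjoint ac_simps)

lemma ideal_gen_base: "g \<in> G \<Longrightarrow> g \<in> ideal_gen m G"
  using ideal_gen.mult[OF _ polys_one, of g G m] by simp

lemma ideal_gen_sum: "(\<And>i. i \<in> I \<Longrightarrow> f i \<in> ideal_gen m G) \<Longrightarrow> sum f I \<in> ideal_gen m G"
  by (induction I rule: infinite_finite_induct) (auto intro: ideal_gen.intros)

lemma eval_at_ideal_gen_eq_0:
  assumes "f \<in> ideal_gen m G" "\<And>g. g \<in> G \<Longrightarrow> eval_at c g = 0"
  shows "eval_at c f = 0"
  using assms by (induction rule: ideal_gen.induct) (auto simp: eval_at_mult eval_at_add)

(* the codewords c \<subseteq> [m] at which x_\<sigma>(1-x_\<tau>) takes the value 1 *)
definition box :: "nat \<Rightarrow> nat set \<Rightarrow> nat set \<Rightarrow> nat set set" where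
  "box m \<sigma> \<tau> = {c. c \<subseteq> {1..m} \<and> \<sigma> \<subseteq> c \<and> c \<inter> \<tau> = {}}"

lemma eval_at_rho:
  assumes "\<sigma> \<subseteq> {1..m}" "c \<subseteq> {1..m}"
  shows "eval_at c (rho m \<sigma>) = of_bool (c = \<sigma>)"
  using assms finite_subset[OF _ finite_atLeastAtMost]
  by (subst rho_def, subst eval_at_pm) auto

lemma pm_eq_sum_rho:
  assumes "\<sigma> \<subseteq> {1..m}" "\<tau> \<subseteq> {1..m}" "\<sigma> \<inter> \<tau> = {}"
  shows "pm \<sigma> \<tau> = (\<Sum>S\<in>Pow ({1..m} - \<sigma> - \<tau>). rho m (\<sigma> \<union> S))"
proof -
  define F where "F = {1..m} - \<sigma> - \<tau>"
  have fin: "finite \<sigma>" "finite \<tau>" "finite F"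
    using assms by (auto simp: F_def intro: finite_subset)
  have "pm \<sigma> \<tau> = pm \<sigma> \<tau> * (\<Prod>k\<in>F. Var k + (1 - Var k))"
    by simp
  also have "\<dots> = pm \<sigma> \<tau> * (\<Sum>S\<in>Pow F. (\<Prod>k\<in>S. Var k) * (\<Prod>k\<in>F - S. 1 - Var k))"
    using fin by (simp only: prod_add)
  also have "\<dots> = (\<Sum>S\<in>Pow F. pm \<sigma> \<tau> * pm S (F - S))"
    by (simp add: sum_distrib_left pm_def)
  also have "\<dots> = (\<Sum>S\<in>Pow F. rho m (\<sigma> \<union> S))"
  proof (rule sum.cong[OF refl])
    fix S assume "S \<in> Pow F"
    then have "pm \<sigma> \<tau> * pm S (F - S) = pm (\<sigma> \<union> S) (\<tau> \<union> (F - S))"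
      using fin by (intro pm_mult) (auto simp: F_def intro: finite_subset)
    also have "\<tau> \<union> (F - S) = {1..m} - (\<sigma> \<union> S)"
      using \<open>S \<in> Pow F\<close> assms by (auto simp: F_def)
    finally show "pm \<sigma> \<tau> * pm S (F - S) = rho m (\<sigma> \<union> S)"
      by (simp add: rho_def)
  qed
  finally show ?thesis
    by (simp add: F_def)
qed

lemma pm_mem_neural_ideal_iff:
  assumes "\<sigma> \<subseteq> {1..m}" "\<tau> \<subseteq> {1..m}" "\<sigma> \<inter> \<tau> = {}"
  shows "pm \<sigma> \<tau> \<in> neural_ideal m D \<longleftrightarrow> box m \<sigma> \<tau> \<inter> D = {}"
proof
  assume mem: "pm \<sigma> \<tau> \<in> neural_ideal m D"
  show "box m \<sigma> \<tau> \<inter> D = {}"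
  proof (rule ccontr)
    assume "box m \<sigma> \<tau> \<inter> D \<noteq> {}"
    then obtain c where c: "c \<subseteq> {1..m}" "\<sigma> \<subseteq> c" "c \<inter> \<tau> = {}" "c \<in> D"
      by (auto simp: box_def)
    have "eval_at c (pm \<sigma> \<tau>) = 0"
      using mem unfolding neural_ideal_def
      by (rule eval_at_ideal_gen_eq_0) (use c eval_at_rho in fastforce)
    moreover have "eval_at c (pm \<sigma> \<tau>) = 1"
      using assms c finite_subset[OF _ finite_atLeastAtMost] by (subst eval_at_pm) auto
    ultimately show False
      by simp
  qed
next
  assume empty: "box m \<sigma> \<tau> \<inter> D = {}"
  have "rho m (\<sigma> \<union> S) \<in> neural_ideal m D" if "S \<in> Pow ({1..m} - \<sigma> - \<tau>)" for S
  proof -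
    have "\<sigma> \<union> S \<in> box m \<sigma> \<tau>"
      using that assms by (auto simp: box_def)
    then show ?thesis
      using empty that assms unfolding neural_ideal_def
      by (intro ideal_gen_base) blast
  qed
  then show "pm \<sigma> \<tau> \<in> neural_ideal m D"
    unfolding pm_eq_sum_rho[OF assms] neural_ideal_def by (rule ideal_gen_sum)
qed

lemma dvd_in_pm_iff:
  assumes "\<sigma> \<subseteq> {1..m}" "\<tau> \<subseteq> {1..m}" "\<sigma>' \<subseteq> {1..m}" "\<tau>' \<subseteq> {1..m}" "\<sigma>' \<inter> \<tau>' = {}"
  shows "dvd_in m (pm \<sigma> \<tau>) (pm \<sigma>' \<tau>') \<longleftrightarrow> \<sigma> \<subseteq> \<sigma>' \<and> \<tau> \<subseteq> \<tau>'"
proof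
  have fin: "finite \<sigma>" "finite \<tau>" "finite \<sigma>'" "finite \<tau>'"
    using assms by (auto intro: finite_subset)
  assume "dvd_in m (pm \<sigma> \<tau>) (pm \<sigma>' \<tau>')"
  then obtain h where h: "pm \<sigma>' \<tau>' = pm \<sigma> \<tau> * h"
    unfolding dvd_in_def by blast
  have *: "\<sigma> \<subseteq> c \<and> \<tau> \<inter> c = {}" if "\<sigma>' \<subseteq> c" "\<tau>' \<inter> c = {}" for c
  proof -
    have "eval_at c (pm \<sigma> \<tau>) * eval_at c h = eval_at c (pm \<sigma>' \<tau>')"
      by (simp only: h eval_at_mult)
    also have "\<dots> = 1"
      using that fin by (simp add: eval_at_pm)
    finally show ?thesis
      using fin by (auto simp: eval_at_pm)
  qed
  \<comment> \<open>evaluate at the smallest and at the largest point of the box of (\<sigma>', \<tau>')\<close>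
  from *[of \<sigma>'] *[of "{1..m} - \<tau>'"] show "\<sigma> \<subseteq> \<sigma>' \<and> \<tau> \<subseteq> \<tau>'"
    using assms by blast
next
  assume "\<sigma> \<subseteq> \<sigma>' \<and> \<tau> \<subseteq> \<tau>'"
  then have "pm \<sigma>' \<tau>' = pm \<sigma> \<tau> * pm (\<sigma>' - \<sigma>) (\<tau>' - \<tau>)"
    using assms by (subst pm_mult) (auto intro: finite_subset simp: Un_absorb1)
  moreover have "pm (\<sigma>' - \<sigma>) (\<tau>' - \<tau>) \<in> polys m"
    using assms by (intro polys_pm) auto
  ultimately show "dvd_in m (pm \<sigma> \<tau>) (pm \<sigma>' \<tau>')"
    unfolding dvd_in_def by blast
qed

lemma pm_eq_iff:
  assumes "\<sigma> \<subseteq> {1..m}" "\<tau> \<subseteq> {1..m}" "\<sigma> \<inter> \<tau> = {}"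
    and "\<sigma>' \<subseteq> {1..m}" "\<tau>' \<subseteq> {1..m}" "\<sigma>' \<inter> \<tau>' = {}"
  shows "pm \<sigma> \<tau> = pm \<sigma>' \<tau>' \<longleftrightarrow> \<sigma> = \<sigma>' \<and> \<tau> = \<tau>'"
proof
  assume "pm \<sigma> \<tau> = pm \<sigma>' \<tau>'"
  then have "dvd_in m (pm \<sigma> \<tau>) (pm \<sigma>' \<tau>')" "dvd_in m (pm \<sigma>' \<tau>') (pm \<sigma> \<tau>)"
    using polys_one unfolding dvd_in_def by (metis mult_1_right)+
  then show "\<sigma> = \<sigma>' \<and> \<tau> = \<tau>'"
    using assms by (auto simp: dvd_in_pm_iff)
qed simp

definition minimal_empty_box :: "nat \<Rightarrow> nat set set \<Rightarrow> nat set \<Rightarrow> nat set \<Rightarrow> bool" where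
  "minimal_empty_box m D \<sigma> \<tau> \<longleftrightarrow> box m \<sigma> \<tau> \<inter> D = {} \<and>
     (\<forall>\<sigma>' \<subseteq> \<sigma>. \<forall>\<tau>' \<subseteq> \<tau>. box m \<sigma>' \<tau>' \<inter> D = {} \<longrightarrow> \<sigma>' = \<sigma> \<and> \<tau>' = \<tau>)"

lemma pm_mem_CF_neural_ideal_iff:
  assumes "\<sigma> \<subseteq> {1..m}" "\<tau> \<subseteq> {1..m}" "\<sigma> \<inter> \<tau> = {}"
  shows "pm \<sigma> \<tau> \<in> CF m (neural_ideal m D) \<longleftrightarrow> minimal_empty_box m D \<sigma> \<tau>"
proof -
  have divisor_iff:
    "(pm \<sigma>' \<tau>' \<in> neural_ideal m D \<and> dvd_in m (pm \<sigma>' \<tau>') (pm \<sigma> \<tau>) \<longrightarrow> pm \<sigma>' \<tau>' = pm \<sigma> \<tau>) \<longleftrightarrow>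
     (\<sigma>' \<subseteq> \<sigma> \<and> \<tau>' \<subseteq> \<tau> \<and> box m \<sigma>' \<tau>' \<inter> D = {} \<longrightarrow> \<sigma>' = \<sigma> \<and> \<tau>' = \<tau>)"
    if "\<sigma>' \<subseteq> {1..m}" "\<tau>' \<subseteq> {1..m}" "\<sigma>' \<inter> \<tau>' = {}" for \<sigma>' \<tau>'
    using that assms by (simp add: pm_mem_neural_ideal_iff dvd_in_pm_iff pm_eq_iff conj_commute)
  have "(\<forall>g. pseudo_monomial m g \<and> g \<in> neural_ideal m D \<and> dvd_in m g (pm \<sigma> \<tau>) \<longrightarrow> g = pm \<sigma> \<tau>)
    \<longleftrightarrow> (\<forall>\<sigma>' \<tau>'. \<sigma>' \<subseteq> {1..m} \<and> \<tau>' \<subseteq> {1..m} \<and> \<sigma>' \<inter> \<tau>' = {} \<longrightarrow>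
          (pm \<sigma>' \<tau>' \<in> neural_ideal m D \<and> dvd_in m (pm \<sigma>' \<tau>') (pm \<sigma> \<tau>) \<longrightarrow> pm \<sigma>' \<tau>' = pm \<sigma> \<tau>))"
    unfolding pseudo_monomial_def by blast
  also have "\<dots> \<longleftrightarrow> (\<forall>\<sigma>' \<tau>'. \<sigma>' \<subseteq> {1..m} \<and> \<tau>' \<subseteq> {1..m} \<and> \<sigma>' \<inter> \<tau>' = {} \<longrightarrow>
          (\<sigma>' \<subseteq> \<sigma> \<and> \<tau>' \<subseteq> \<tau> \<and> box m \<sigma>' \<tau>' \<inter> D = {} \<longrightarrow> \<sigma>' = \<sigma> \<and> \<tau>' = \<tau>))"
    by (simp only: divisor_iff cong: imp_cong)
  also have "\<dots> \<longleftrightarrow> (\<forall>\<sigma>' \<subseteq> \<sigma>. \<forall>\<tau>' \<subseteq> \<tau>. box m \<sigma>' \<tau>' \<inter> D = {} \<longrightarrow> \<sigma>' = \<sigma> \<and> \<tau>' = \<tau>)"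
  proof -
    have valid: "\<sigma>' \<subseteq> {1..m} \<and> \<tau>' \<subseteq> {1..m} \<and> \<sigma>' \<inter> \<tau>' = {}"
      if "\<sigma>' \<subseteq> \<sigma>" "\<tau>' \<subseteq> \<tau>" for \<sigma>' \<tau>'
      using that assms by blast
    show ?thesis
      by (intro iffI allI impI) (meson valid)+
  qed
  moreover have "pseudo_monomial m (pm \<sigma> \<tau>)"
    using assms unfolding pseudo_monomial_def by blast
  ultimately show ?thesis
    using assms unfolding CF_def minimal_empty_box_def
    by (simp add: pm_mem_neural_ideal_iff)
qed

lemma mem_CF_neural_ideal_iff:
  "f \<in> CF m (neural_ideal m D) \<longleftrightarrow>
   (\<exists>\<sigma> \<tau>. \<sigma> \<subseteq> {1..m} \<and> \<tau> \<subseteq> {1..m} \<and> \<sigma> \<inter> \<tau> = {} \<and> f = pm \<sigma> \<tau> \<and> minimal_empty_box m D \<sigma> \<tau>)"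
proof
  assume f: "f \<in> CF m (neural_ideal m D)"
  then have "pseudo_monomial m f"
    by (simp add: CF_def)
  then obtain \<sigma> \<tau> where st: "\<sigma> \<subseteq> {1..m}" "\<tau> \<subseteq> {1..m}" "\<sigma> \<inter> \<tau> = {}" "f = pm \<sigma> \<tau>"
    unfolding pseudo_monomial_def by blast
  moreover have "minimal_empty_box m D \<sigma> \<tau>"
    using f st pm_mem_CF_neural_ideal_iff[OF st(1-3)] by simp
  ultimately show "\<exists>\<sigma> \<tau>. \<sigma> \<subseteq> {1..m} \<and> \<tau> \<subseteq> {1..m} \<and> \<sigma> \<inter> \<tau> = {} \<and> f = pm \<sigma> \<tau> \<and>
      minimal_empty_box m D \<sigma> \<tau>"
    by blast
next
  assume "\<exists>\<sigma> \<tau>. \<sigma> \<subseteq> {1..m} \<and> \<tau> \<subseteq> {1..m} \<and> \<sigma> \<inter> \<tau> = {} \<and> f = pm \<sigma> \<tau> \<and> minimal_empty_box m D \<sigma> \<tau>"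
  then show "f \<in> CF m (neural_ideal m D)"
    by (elim exE conjE) (simp add: pm_mem_CF_neural_ideal_iff)
qed

lemma box_code_del:
  assumes "C \<subseteq> Pow {1..Suc m}" "\<sigma> \<subseteq> {1..m}" "\<tau> \<subseteq> {1..m}"
  shows "box m \<sigma> \<tau> \<inter> code_del C (Suc m) = (\<lambda>c. c - {Suc m}) ` (box (Suc m) \<sigma> \<tau> \<inter> C)"
proof -
  have "c - {Suc m} \<in> box m \<sigma> \<tau> \<longleftrightarrow> c \<in> box (Suc m) \<sigma> \<tau>" if "c \<in> C" for c
    using that assms by (auto simp: box_def)
  then show ?thesis
    unfolding code_del_def by (auto simp: image_iff)
qed

lemma minimal_empty_box_code_del_iff:
  assumes "C \<subseteq> Pow {1..Suc m}" "\<sigma> \<subseteq> {1..m}" "\<tau> \<subseteq> {1..m}"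
  shows "minimal_empty_box m (code_del C (Suc m)) \<sigma> \<tau> \<longleftrightarrow> minimal_empty_box (Suc m) C \<sigma> \<tau>"
proof -
  have "box m \<sigma>' \<tau>' \<inter> code_del C (Suc m) = {} \<longleftrightarrow> box (Suc m) \<sigma>' \<tau>' \<inter> C = {}"
    if "\<sigma>' \<subseteq> \<sigma>" "\<tau>' \<subseteq> \<tau>" for \<sigma>' \<tau>'
    using that assms by (subst box_code_del) auto
  then show ?thesis
    unfolding minimal_empty_box_def by (metis order_refl)
qed

lemma dvd_in_Var_pm_iff:
  assumes "i \<in> {1..m}" "\<sigma> \<subseteq> {1..m}" "\<tau> \<subseteq> {1..m}" "\<sigma> \<inter> \<tau> = {}"
  shows "dvd_in m (Var i) (pm \<sigma> \<tau>) \<longleftrightarrow> i \<in> \<sigma>"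
proof -
  have "Var i = pm {i} {}"
    by (simp add: pm_def)
  then show ?thesis
    using assms by (simp add: dvd_in_pm_iff)
qed

lemma dvd_in_one_minus_Var_pm_iff:
  assumes "i \<in> {1..m}" "\<sigma> \<subseteq> {1..m}" "\<tau> \<subseteq> {1..m}" "\<sigma> \<inter> \<tau> = {}"
  shows "dvd_in m (1 - Var i) (pm \<sigma> \<tau>) \<longleftrightarrow> i \<in> \<tau>"
proof -
  have "1 - Var i = pm {} {i}"
    by (simp add: pm_def)
  then show ?thesis
    using assms by (simp add: dvd_in_pm_iff)
qed

lemma subset_atLeastAtMost_Suc_iff:
  "A \<subseteq> {a..Suc m} \<and> Suc m \<notin> A \<longleftrightarrow> A \<subseteq> {a..m}"
  by (auto simp: subset_iff le_Suc_eq)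

lemma mem_CF_neural_ideal_code_del_iff:
  assumes C: "C \<subseteq> Pow {1..Suc m}"
  shows "f \<in> CF m (neural_ideal m (code_del C (Suc m))) \<longleftrightarrow>
    f \<in> CF (Suc m) (neural_ideal (Suc m) C) \<and>
    \<not> dvd_in (Suc m) (Var (Suc m)) f \<and> \<not> dvd_in (Suc m) (1 - Var (Suc m)) f"
proof
  assume "f \<in> CF m (neural_ideal m (code_del C (Suc m)))"
  then obtain \<sigma> \<tau> where st: "\<sigma> \<subseteq> {1..m}" "\<tau> \<subseteq> {1..m}" "\<sigma> \<inter> \<tau> = {}" "f = pm \<sigma> \<tau>"
    and min: "minimal_empty_box m (code_del C (Suc m)) \<sigma> \<tau>"
    unfolding mem_CF_neural_ideal_iff by blast
  have st': "\<sigma> \<subseteq> {1..Suc m}" "\<tau> \<subseteq> {1..Suc m}" "Suc m \<notin> \<sigma>" "Suc m \<notin> \<tau>"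
    using st(1,2) subset_atLeastAtMost_Suc_iff by blast+
  have "minimal_empty_box (Suc m) C \<sigma> \<tau>"
    using min minimal_empty_box_code_del_iff[OF C st(1,2)] by simp
  then have "f \<in> CF (Suc m) (neural_ideal (Suc m) C)"
    unfolding mem_CF_neural_ideal_iff using st st' by blast
  moreover have "\<not> dvd_in (Suc m) (Var (Suc m)) f" "\<not> dvd_in (Suc m) (1 - Var (Suc m)) f"
    using st' st(3,4) by (simp_all add: dvd_in_Var_pm_iff dvd_in_one_minus_Var_pm_iff)
  ultimately show "f \<in> CF (Suc m) (neural_ideal (Suc m) C) \<and>
    \<not> dvd_in (Suc m) (Var (Suc m)) f \<and> \<not> dvd_in (Suc m) (1 - Var (Suc m)) f"
    by simp
next
  assume f: "f \<in> CF (Suc m) (neural_ideal (Suc m) C) \<and>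
    \<not> dvd_in (Suc m) (Var (Suc m)) f \<and> \<not> dvd_in (Suc m) (1 - Var (Suc m)) f"
  then obtain \<sigma> \<tau> where st: "\<sigma> \<subseteq> {1..Suc m}" "\<tau> \<subseteq> {1..Suc m}" "\<sigma> \<inter> \<tau> = {}" "f = pm \<sigma> \<tau>"
    and min: "minimal_empty_box (Suc m) C \<sigma> \<tau>"
    unfolding mem_CF_neural_ideal_iff by blast
  have "Suc m \<notin> \<sigma>" "Suc m \<notin> \<tau>"
    using f st by (simp_all add: dvd_in_Var_pm_iff dvd_in_one_minus_Var_pm_iff)
  then have st': "\<sigma> \<subseteq> {1..m}" "\<tau> \<subseteq> {1..m}"
    using st(1,2) subset_atLeastAtMost_Suc_iff by blast+
  have "minimal_empty_box m (code_del C (Suc m)) \<sigma> \<tau>"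
    using min minimal_empty_box_code_del_iff[OF C st'] by simp
  then show "f \<in> CF m (neural_ideal m (code_del C (Suc m)))"
    unfolding mem_CF_neural_ideal_iff using st st' by blast
qed

theorem lemma2p1:
  fixes n :: nat and C :: "nat set set"
  assumes "n \<ge> 1" and "is_code n C"
  shows "CF (n - 1) (neural_ideal (n - 1) (code_del C n)) =
         CF n (neural_ideal n C) -
         {f \<in> CF n (neural_ideal n C). dvd_in n (Var n) f \<or> dvd_in n (1 - Var n) f}"
proof -
  obtain m where n: "n = Suc m"
    using assms(1) by (cases n) auto
  have "C \<subseteq> Pow {1..Suc m}"
    using assms(2) by (simp add: is_code_def n)
  then show ?thesis
    unfolding n by (auto simp: mem_CF_neural_ideal_code_del_iff)
qed

end
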